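(* Let $K\in\mathbb{R}^{m\times n}$, $P_0\in\mathbb{R}^{n\times n}$ symmetric, and $H\in\mathbb{R}^{m\times m}$ diagonal with $P_0+K^\top HK\succ0$. Suppose $H=H_p-H_n$ with diagonal $H_p\succ0$, $H_n\succeq0$ and $P_0-K^\top H_nK\succeq0$. Let $$V(x)=\tfrac12\big(x^\top P_0x+x^\top K^\top HKx-\mathrm{dz}(Kx)^\top H\,\mathrm{dz}(Kx)\big)=\begin{bmatrix}x\\ \mathrm{dz}(Kx)\end{bmatrix}^\top Q\begin{bmatrix}x\\ \mathrm{dz}(Kx)\end{bmatrix},\quad Q=\tfrac12\begin{bmatrix}P_0+K^\top HK&0\\0&-H\end{bmatrix}.$$ Then there exists a diagonal $T_0\succ0$ with $Q_{11}\succ0$ and $Q-\Sigma_0\succeq0$; consequently $V$ is positive definite and radially unbounded.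
   Context: Decentralized saturation $\mathrm{sat}(u)_i=\min\{\overline{u}_i,\max\{-\underline{u}_i,u_i\}\}$ with $\overline{u}_i,\underline{u}_i>0$; $\mathrm{dz}(u)=u-\mathrm{sat}(u)$. $Q_{11}$ denotes the upper-left $n\times n$ block of $Q$, and $\Sigma_0=\begin{bmatrix}0&K^\top T_0\\ T_0K&-2T_0\end{bmatrix}$. *)

theory Defs
  imports "HOL-Analysis.Analysis"
begin

definition sat :: "real^'m \<Rightarrow> real^'m \<Rightarrow> real^'m \<Rightarrow> real^'m" where
  "sat ub lb u = (\<chi> i. min (ub$i) (max (-(lb$i)) (u$i)))"

definition dz :: "real^'m \<Rightarrow> real^'m \<Rightarrow> real^'m \<Rightarrow> real^'m" where
  "dz ub lb u = u - sat ub lb u"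

definition diag_mat :: "real^'m^'m \<Rightarrow> bool" where
  "diag_mat A \<longleftrightarrow> (\<forall>i j. i \<noteq> j \<longrightarrow> A$i$j = 0)"

definition sym_mat :: "real^'m^'m \<Rightarrow> bool" where
  "sym_mat A \<longleftrightarrow> transpose A = A"

definition pos_def :: "real^'m^'m \<Rightarrow> bool" where
  "pos_def A \<longleftrightarrow> sym_mat A \<and> (\<forall>x. x \<noteq> 0 \<longrightarrow> x \<bullet> (A *v x) > 0)"

definition psd :: "real^'m^'m \<Rightarrow> bool" where
  "psd A \<longleftrightarrow> sym_mat A \<and> (\<forall>x. x \<bullet> (A *v x) \<ge> 0)"

definition blk :: "real^'n::finite^'n \<Rightarrow> real^'m^'n \<Rightarrow> real^'n^'m \<Rightarrow> real^'m::finite^'m \<Rightarrow> real^('n+'m)^('n+'m)" where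
  "blk A B C D = (\<chi> i j. (case i of
       Inl a \<Rightarrow> (case j of Inl b \<Rightarrow> A$a$b | Inr b \<Rightarrow> B$a$b)
     | Inr a \<Rightarrow> (case j of Inl b \<Rightarrow> C$a$b | Inr b \<Rightarrow> D$a$b)))"

definition blk11 :: "real^('n::finite+'m::finite)^('n+'m) \<Rightarrow> real^'n^'n" where
  "blk11 M = (\<chi> a b. M $ Inl a $ Inl b)"

definition Qmat :: "real^'n::finite^'n \<Rightarrow> real^'n^'m \<Rightarrow> real^'m::finite^'m \<Rightarrow> real^('n+'m)^('n+'m)" where
  "Qmat P0 K H = (1/2) *\<^sub>R blk (P0 + transpose K ** H ** K) 0 0 (- H)"

definition Sigma0 :: "real^'n::finite^'m::finite \<Rightarrow> real^'m^'m \<Rightarrow> real^('n+'m)^('n+'m)" where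
  "Sigma0 K T0 = blk 0 (transpose K ** T0) (T0 ** K) (-(2 *\<^sub>R T0))"

definition Vfun :: "real^'m \<Rightarrow> real^'m \<Rightarrow> real^'n^'n \<Rightarrow> real^'n^'m \<Rightarrow> real^'m^'m \<Rightarrow> real^'n \<Rightarrow> real" where
  "Vfun ub lb P0 K H x = (1/2) * (x \<bullet> (P0 *v x) + x \<bullet> ((transpose K ** H ** K) *v x)
      - dz ub lb (K *v x) \<bullet> (H *v dz ub lb (K *v x)))"

end

theory Submission
  imports Defs
begin

text \<open>
Write \<open>y = K x\<close> and \<open>d = dz y\<close>. Since \<open>H = Hp - Hn\<close>,
\<open>2 V x = x\<^sup>T (P0 - K\<^sup>T Hn K) x + (y\<^sup>T Hp y - d\<^sup>T Hp d) + d\<^sup>T Hn d\<close>,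
and because \<open>Hp\<close> is diagonal and the dead zone satisfies \<open>|dz t| \<le> |t|\<close>, strictly for
\<open>t \<noteq> 0\<close>, the middle term is a positive combination of \<open>y\<^sub>i\<^sup>2 - d\<^sub>i\<^sup>2 \<ge> 0\<close>. A nonzero \<open>x\<close>
either makes the first term positive or has \<open>y \<noteq> 0\<close>, hence \<open>V x > 0\<close>. Outside the
linear region \<open>y\<^sub>i\<^sup>2 - d\<^sub>i\<^sup>2\<close> grows linearly in \<open>|y\<^sub>i|\<close>, so \<open>2 V\<close> dominates a nonnegative
quadratic form plus a positive 1-homogeneous function, minus a constant; by compactness of
the unit sphere such a sum grows at least linearly.

For \<open>T0 = Hp / 2\<close> the quadratic form of \<open>Q - \<Sigma>0\<close> at \<open>(x, w)\<close> equals
\<open>(x\<^sup>T (P0 - K\<^sup>T Hn K) x + (K x - w)\<^sup>T Hp (K x - w) + w\<^sup>T Hn w) / 2 \<ge> 0\<close>.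
\<close>

lemma inner_transpose_mv: "(x::real^'n) \<bullet> (transpose (K::real^'n^'m) *v w) = (K *v x) \<bullet> w"
  by (simp add: dot_lmul_matrix[symmetric] inner_commute)

lemma inner_mv_sym: "sym_mat A \<Longrightarrow> u \<bullet> ((A::real^'n^'n) *v v) = v \<bullet> (A *v u)"
  unfolding sym_mat_def by (metis inner_transpose_mv inner_commute)

lemma uminus_mv: "(- A) *v x = - ((A::real^'n^'m) *v x)"
  by (simp add: vec_eq_iff matrix_vector_mult_def sum_negf)

lemma quadratic_form_conj:
  "(x::real^'n) \<bullet> ((transpose (K::real^'n^'m) ** D ** K) *v x) = (K *v x) \<bullet> (D *v (K *v x))"
  by (metis matrix_vector_mul_assoc inner_transpose_mv)

lemma quadratic_form_diff:
  "sym_mat A \<Longrightarrow>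
    (u - v) \<bullet> ((A::real^'n^'n) *v (u - v)) = u \<bullet> (A *v u) - 2 * (u \<bullet> (A *v v)) + v \<bullet> (A *v v)"
  using inner_mv_sym[of A u v]
  by (simp add: matrix_vector_mult_diff_distrib inner_diff_left inner_diff_right)

lemma quadratic_form_split:
  fixes K :: "real^'n^'m" and P0 :: "real^'n^'n"
  shows "x \<bullet> ((P0 + transpose K ** (Hp - Hn) ** K) *v x) =
    x \<bullet> ((P0 - transpose K ** Hn ** K) *v x) + (K *v x) \<bullet> (Hp *v (K *v x))"
  by (simp add: matrix_vector_mult_add_rdistrib matrix_vector_mult_diff_rdistrib inner_add_right
      inner_diff_right quadratic_form_conj del: transpose_matrix_vector)

lemma transpose_add: "transpose (A + B) = transpose A + transpose (B::real^'n^'m)"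
  by (simp add: vec_eq_iff transpose_def)

lemma transpose_diff: "transpose (A - B) = transpose A - transpose (B::real^'n^'m)"
  by (simp add: vec_eq_iff transpose_def)

lemma transpose_uminus: "transpose (- A) = - transpose (A::real^'n^'m)"
  by (simp add: vec_eq_iff transpose_def)

lemma sym_mat_conj: "sym_mat D \<Longrightarrow> sym_mat (transpose (K::real^'n^'m) ** D ** K)"
  unfolding sym_mat_def by (simp add: matrix_transpose_mul matrix_mul_assoc)

lemma diag_mat_mv: "diag_mat D \<Longrightarrow> (D::real^'m^'m) *v u = (\<chi> i. D$i$i * u$i)"
proof -
  assume "diag_mat D"
  then have "(\<Sum>j\<in>UNIV. D$i$j * u$j) = D$i$i * u$i" for i
    unfolding diag_mat_def by (subst sum.remove[of UNIV i]) (auto intro!: sum.neutral)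
  then show ?thesis by (simp add: matrix_vector_mult_def)
qed

lemma inner_diag_mat_mv:
  "diag_mat D \<Longrightarrow> v \<bullet> ((D::real^'m^'m) *v u) = (\<Sum>i\<in>UNIV. D$i$i * v$i * u$i)"
  by (simp add: diag_mat_mv inner_vec_def mult_ac)

lemma diag_mat_scaleR: "diag_mat A \<Longrightarrow> diag_mat (c *\<^sub>R A)"
  unfolding diag_mat_def by simp

lemma axis_quadratic_form: "axis i 1 \<bullet> ((D::real^'m^'m) *v axis i 1) = D$i$i"
  by (simp add: matrix_vector_mult_basis inner_axis' column_def)

lemma pos_def_diag_pos: "pos_def (D::real^'m^'m) \<Longrightarrow> D$i$i > 0"
  unfolding pos_def_def by (metis axis_quadratic_form axis_eq_0_iff zero_neq_one)

lemma pos_def_scaleR: "pos_def A \<Longrightarrow> c > 0 \<Longrightarrow> pos_def (c *\<^sub>R A)"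
  unfolding pos_def_def sym_mat_def by (simp add: transpose_scalar scaleR_matrix_vector_assoc[symmetric])

lemma pos_def_imp_psd: "pos_def A \<Longrightarrow> psd A"
  unfolding pos_def_def psd_def by (metis inner_zero_left order.refl less_imp_le)

lemma sum_UNIV_Plus:
  "(\<Sum>i\<in>(UNIV::('a::finite + 'b::finite) set). f i) = (\<Sum>a\<in>UNIV. f (Inl a)) + (\<Sum>b\<in>UNIV. f (Inr b))"
  by (subst UNIV_Plus_UNIV[symmetric], subst sum.Plus) simp_all

lemma inner_blk_mv:
  fixes z :: "real^('n::finite + 'm::finite)"
  defines "x \<equiv> \<chi> a. z $ Inl a" and "w \<equiv> \<chi> b. z $ Inr b"
  shows "z \<bullet> (blk A B C D *v z) =
    x \<bullet> (A *v x) + x \<bullet> (B *v w) + w \<bullet> (C *v x) + w \<bullet> (D *v w)"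
  unfolding x_def w_def
  by (simp add: inner_vec_def sum_UNIV_Plus matrix_vector_mult_def blk_def algebra_simps
      sum_distrib_left sum.distrib)

lemma transpose_blk:
  "transpose (blk A B C D) = blk (transpose A) (transpose C) (transpose B) (transpose D)"
  by (simp add: vec_eq_iff blk_def transpose_def split: sum.split)

lemma scaleR_blk: "c *\<^sub>R blk A B C D = blk (c *\<^sub>R A) (c *\<^sub>R B) (c *\<^sub>R C) (c *\<^sub>R D)"
  by (simp add: vec_eq_iff blk_def split: sum.split)

lemma blk_diff: "blk A B C D - blk A' B' C' D' = blk (A - A') (B - B') (C - C') (D - D')"
  by (simp add: vec_eq_iff blk_def split: sum.split)

lemma blk11_blk [simp]: "blk11 (blk A B C D) = A"
  by (simp add: vec_eq_iff blk_def blk11_def)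

lemma psd_Qmat_minus_Sigma0:
  fixes K :: "real^'n::finite^'m::finite" and P0 :: "real^'n^'n" and Hp Hn :: "real^'m^'m"
  assumes Hp: "psd Hp" and Hn: "psd Hn" and Pn: "psd (P0 - transpose K ** Hn ** K)"
  shows "psd (Qmat P0 K (Hp - Hn) - Sigma0 K ((1/2) *\<^sub>R Hp))"
proof -
  let ?T0 = "(1/2::real) *\<^sub>R Hp"
  define M where "M = blk ((1/2) *\<^sub>R (P0 + transpose K ** (Hp - Hn) ** K))
    (- (transpose K ** ?T0)) (- (?T0 ** K)) ((1/2) *\<^sub>R (Hp + Hn))"
  have sym_Hp: "sym_mat Hp" and sym_Hn: "sym_mat Hn"
    using Hp Hn unfolding psd_def by auto
  then have sym_P0: "transpose P0 = P0"
    using Pn sym_mat_conj[of Hn K] unfolding psd_def sym_mat_def by (simp add: transpose_diff)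
  have D: "(1/2::real) *\<^sub>R (- (Hp - Hn)) - - (2 *\<^sub>R ?T0) = (1/2) *\<^sub>R (Hp + Hn)"
    by (simp add: vec_eq_iff field_simps)
  have "Qmat P0 K (Hp - Hn) - Sigma0 K ?T0 = M"
    unfolding M_def Qmat_def Sigma0_def scaleR_blk blk_diff D by simp
  moreover have "sym_mat M"
    using sym_Hp sym_Hn unfolding M_def sym_mat_def transpose_blk
    by (simp add: transpose_scalar transpose_add transpose_diff transpose_uminus matrix_transpose_mul
        matrix_mul_assoc sym_P0)
  moreover have "0 \<le> z \<bullet> (M *v z)" for z
  proof -
    define x where "x = (\<chi> a. z $ Inl a)"
    define w where "w = (\<chi> b. z $ Inr b)"
    have "z \<bullet> (M *v z) = (1/2) * (x \<bullet> ((P0 - transpose K ** Hn ** K) *v x)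
        + (K *v x - w) \<bullet> (Hp *v (K *v x - w)) + w \<bullet> (Hn *v w))"
      using inner_mv_sym[OF sym_Hp, of "K *v x" w]
      unfolding M_def inner_blk_mv x_def[symmetric] w_def[symmetric] quadratic_form_diff[OF sym_Hp]
      by (simp add: matrix_vector_mult_add_rdistrib matrix_vector_mult_diff_rdistrib inner_add_right
          inner_diff_right scaleR_matrix_vector_assoc[symmetric] uminus_mv
          matrix_vector_mul_assoc[symmetric] inner_transpose_mv quadratic_form_conj algebra_simps
          del: transpose_matrix_vector)
    moreover have "0 \<le> x \<bullet> ((P0 - transpose K ** Hn ** K) *v x)"
      "0 \<le> (K *v x - w) \<bullet> (Hp *v (K *v x - w))" "0 \<le> w \<bullet> (Hn *v w)"
      using Hp Hn Pn unfolding psd_def by blast+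
    ultimately show ?thesis
      by simp
  qed
  ultimately show ?thesis
    unfolding psd_def by simp
qed

lemma linear_growth_of_homogeneous:
  fixes q l :: "'a::euclidean_space \<Rightarrow> real"
  assumes "continuous_on UNIV q" "continuous_on UNIV l"
    and q_hom: "\<And>c x. q (c *\<^sub>R x) = c\<^sup>2 * q x"
    and l_hom: "\<And>c x. 0 \<le> c \<Longrightarrow> l (c *\<^sub>R x) = c * l x"
    and q_nonneg: "\<And>x. 0 \<le> q x" and pos: "\<And>x. x \<noteq> 0 \<Longrightarrow> 0 < q x + l x"
  shows "\<exists>m>0. \<forall>x. 1 \<le> norm x \<longrightarrow> m * norm x \<le> q x + l x"
proof -
  have "continuous_on (sphere 0 1) (\<lambda>x. q x + l x)"
    using assms(1,2) by (intro continuous_intros) (auto intro: continuous_on_subset)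
  then obtain v where v: "v \<in> sphere 0 1"
    and v_min: "\<And>u. u \<in> sphere 0 1 \<Longrightarrow> q v + l v \<le> q u + l u"
    using continuous_attains_inf[OF compact_sphere, of 0 1 "\<lambda>x. q x + l x"]
    by (auto simp: sphere_eq_empty)
  have "(q v + l v) * norm x \<le> q x + l x" if "1 \<le> norm x" for x
  proof -
    define u where "u = (1 / norm x) *\<^sub>R x"
    have x: "x = norm x *\<^sub>R u"
      using that by (simp add: u_def)
    have "norm x \<le> (norm x)\<^sup>2"
      using that by (simp add: power2_eq_square mult_le_cancel_left1)
    then have "norm x * q u \<le> (norm x)\<^sup>2 * q u"
      using q_nonneg by (rule mult_right_mono)
    moreover have "q v + l v \<le> q u + l u"
      using that by (intro v_min) (auto simp: u_def)
    then have "(q v + l v) * norm x \<le> (q u + l u) * norm x"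
      by (simp add: mult_right_mono)
    ultimately show ?thesis
      by (subst (1 2) x) (simp add: q_hom l_hom algebra_simps)
  qed
  moreover have "0 < q v + l v"
    using v by (intro pos) auto
  ultimately show ?thesis
    by blast
qed

lemma filterlim_at_infinity_of_linear_lower_bound:
  fixes f :: "'a::real_normed_vector \<Rightarrow> real"
  assumes "0 < m" and "\<And>x. r \<le> norm x \<Longrightarrow> m * norm x - C \<le> f x"
  shows "filterlim f at_top at_infinity"
proof (rule filterlim_at_top_mono)
  show "filterlim (\<lambda>x. - C + m * norm x) at_top at_infinity"
    by (intro filterlim_tendsto_add_at_top[OF tendsto_const]
        filterlim_tendsto_pos_mult_at_top[OF tendsto_const \<open>0 < m\<close> filterlim_norm_at_top])
  show "\<forall>\<^sub>F x in at_infinity. - C + m * norm x \<le> f x"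
    using assms(2) by (intro eventually_at_infinityI[of r]) simp
qed

definition deadzone :: "real \<Rightarrow> real \<Rightarrow> real \<Rightarrow> real" where
  "deadzone a c t = t - min a (max (- c) t)"

lemma dz_nth: "dz ub lb u $ i = deadzone (ub $ i) (lb $ i) (u $ i)"
  by (simp add: dz_def sat_def deadzone_def)

lemma deadzone_zero: "0 \<le> a \<Longrightarrow> 0 \<le> c \<Longrightarrow> deadzone a c 0 = 0"
  by (simp add: deadzone_def)

lemma deadzone_square_le: "0 \<le> a \<Longrightarrow> 0 \<le> c \<Longrightarrow> (deadzone a c t)\<^sup>2 \<le> t\<^sup>2"
  unfolding abs_le_square_iff[symmetric] by (auto simp: deadzone_def)

lemma deadzone_square_less: "0 < a \<Longrightarrow> 0 < c \<Longrightarrow> t \<noteq> 0 \<Longrightarrow> (deadzone a c t)\<^sup>2 < t\<^sup>2"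
  unfolding abs_le_square_iff[symmetric] not_le[symmetric] by (auto simp: deadzone_def)

lemma square_minus_deadzone_ge:
  assumes "0 \<le> a" "0 \<le> c"
  shows "min a c * (\<bar>t\<bar> - min a c) \<le> t\<^sup>2 - (deadzone a c t)\<^sup>2"
proof -
  consider "- c \<le> t" "t \<le> a" | "a < t" | "t < - c" by linarith
  then show ?thesis
  proof cases
    case 1
    then have "deadzone a c t = 0"
      by (simp add: deadzone_def)
    moreover have "0 \<le> (\<bar>t\<bar> - min a c)\<^sup>2 + t\<^sup>2 + (min a c)\<^sup>2"
      by simp
    ultimately show ?thesis
      by (simp add: power2_eq_square algebra_simps)
  next
    case 2
    then have "t\<^sup>2 - (deadzone a c t)\<^sup>2 = a * (t + (t - a))"
      by (simp add: deadzone_def power2_eq_square algebra_simps)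
    also have "\<dots> \<ge> min a c * (\<bar>t\<bar> - min a c)"
      using 2 assms by (intro mult_mono) auto
    finally show ?thesis .
  next
    case 3
    then have "t\<^sup>2 - (deadzone a c t)\<^sup>2 = c * (- t + (- t - c))"
      using assms by (simp add: deadzone_def power2_eq_square algebra_simps)
    also have "\<dots> \<ge> min a c * (\<bar>t\<bar> - min a c)"
      using 3 assms by (intro mult_mono) auto
    finally show ?thesis .
  qed
qed

lemma dz_zero: "(\<And>i. 0 \<le> ub $ i) \<Longrightarrow> (\<And>i. 0 \<le> lb $ i) \<Longrightarrow> dz ub lb 0 = 0"
  by (simp add: vec_eq_iff dz_nth deadzone_zero)

lemma Vfun_zero: "(\<And>i. 0 \<le> ub $ i) \<Longrightarrow> (\<And>i. 0 \<le> lb $ i) \<Longrightarrow> Vfun ub lb P0 K H 0 = 0"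
  by (simp add: Vfun_def dz_zero)

lemma Vfun_split:
  fixes K :: "real^'n^'m" and x :: "real^'n" and ub lb :: "real^'m"
  defines "y \<equiv> K *v x" and "d \<equiv> dz ub lb (K *v x)"
  shows "2 * Vfun ub lb P0 K (Hp - Hn) x = x \<bullet> ((P0 - transpose K ** Hn ** K) *v x)
    + (y \<bullet> (Hp *v y) - d \<bullet> (Hp *v d)) + d \<bullet> (Hn *v d)"
  unfolding Vfun_def y_def d_def
  by (simp add: matrix_vector_mult_diff_rdistrib inner_diff_right quadratic_form_conj
      del: transpose_matrix_vector)

locale saturated_lyapunov =
  fixes ub lb :: "real^'m::finite" and K :: "real^'n::finite^'m" and P0 :: "real^'n^'n"
    and Hp Hn :: "real^'m^'m"
  assumes ub_pos: "\<And>i. 0 < ub $ i" and lb_pos: "\<And>i. 0 < lb $ i"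
    and diag_Hp: "diag_mat Hp" and pos_def_Hp: "pos_def Hp" and psd_Hn: "psd Hn"
    and psd_Pn: "psd (P0 - transpose K ** Hn ** K)"
    and pos_def_P: "pos_def (P0 + transpose K ** (Hp - Hn) ** K)"
begin

abbreviation V :: "real^'n \<Rightarrow> real" where
  "V \<equiv> Vfun ub lb P0 K (Hp - Hn)"

abbreviation Pn_form :: "real^'n \<Rightarrow> real" where
  "Pn_form x \<equiv> x \<bullet> ((P0 - transpose K ** Hn ** K) *v x)"

abbreviation sat_level :: "'m \<Rightarrow> real" where
  "sat_level i \<equiv> min (ub $ i) (lb $ i)"

lemma twice_V_eq:
  "2 * V x = Pn_form x + (\<Sum>i\<in>UNIV. Hp$i$i * (((K *v x) $ i)\<^sup>2 - (dz ub lb (K *v x) $ i)\<^sup>2))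
    + dz ub lb (K *v x) \<bullet> (Hn *v dz ub lb (K *v x))"
  unfolding Vfun_split inner_diag_mat_mv[OF diag_Hp]
  by (simp add: sum_subtractf power2_eq_square algebra_simps)

lemma Pn_form_pos_or_K_nonzero: "x \<noteq> 0 \<Longrightarrow> 0 < Pn_form x \<or> K *v x \<noteq> 0"
  using pos_def_P quadratic_form_split[of x P0 K Hp Hn] unfolding pos_def_def by auto

lemma Hp_diag_pos: "0 < Hp$i$i"
  using pos_def_Hp by (rule pos_def_diag_pos)

lemma dz_term_nonneg: "0 \<le> Hp$i$i * ((u $ i)\<^sup>2 - (dz ub lb u $ i)\<^sup>2)"
  using Hp_diag_pos[of i] deadzone_square_le[of "ub $ i" "lb $ i" "u $ i"] ub_pos[of i] lb_pos[of i]
  by (simp add: dz_nth)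

lemma dz_term_pos: "u $ i \<noteq> 0 \<Longrightarrow> 0 < Hp$i$i * ((u $ i)\<^sup>2 - (dz ub lb u $ i)\<^sup>2)"
  using Hp_diag_pos[of i] deadzone_square_less[of "ub $ i" "lb $ i" "u $ i"] ub_pos[of i] lb_pos[of i]
  by (simp add: dz_nth)

lemma dz_term_ge:
  "Hp$i$i * sat_level i * \<bar>u $ i\<bar> - Hp$i$i * (sat_level i)\<^sup>2
    \<le> Hp$i$i * ((u $ i)\<^sup>2 - (dz ub lb u $ i)\<^sup>2)"
proof -
  have "sat_level i * (\<bar>u $ i\<bar> - sat_level i) \<le> (u $ i)\<^sup>2 - (dz ub lb u $ i)\<^sup>2"
    using square_minus_deadzone_ge ub_pos[of i] lb_pos[of i] by (simp add: dz_nth less_imp_le)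
  from mult_left_mono[OF this less_imp_le[OF Hp_diag_pos]] show ?thesis
    by (simp add: algebra_simps power2_eq_square)
qed

lemma Pn_form_nonneg: "0 \<le> Pn_form x"
  using psd_Pn unfolding psd_def by blast

lemma dz_Hn_nonneg: "0 \<le> dz ub lb u \<bullet> (Hn *v dz ub lb u)"
  using psd_Hn unfolding psd_def by blast

lemma V_pos:
  assumes "x \<noteq> 0" shows "0 < V x"
proof -
  have "0 < Pn_form x + (\<Sum>i\<in>UNIV. Hp$i$i * (((K *v x) $ i)\<^sup>2 - (dz ub lb (K *v x) $ i)\<^sup>2))"
    using Pn_form_pos_or_K_nonzero[OF assms]
  proof
    assume "0 < Pn_form x"
    then show ?thesis
      using dz_term_nonneg by (simp add: add_pos_nonneg sum_nonneg)
  next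
    assume "K *v x \<noteq> 0"
    then obtain i where "(K *v x) $ i \<noteq> 0"
      by (auto simp: vec_eq_iff)
    then have "0 < (\<Sum>i\<in>UNIV. Hp$i$i * (((K *v x) $ i)\<^sup>2 - (dz ub lb (K *v x) $ i)\<^sup>2))"
      by (intro sum_pos2[of _ i] dz_term_pos dz_term_nonneg) auto
    then show ?thesis
      using Pn_form_nonneg[of x] by linarith
  qed
  then show ?thesis
    using twice_V_eq[of x] dz_Hn_nonneg[of "K *v x"] by linarith
qed

lemma twice_V_ge:
  "Pn_form x + (\<Sum>i\<in>UNIV. Hp$i$i * sat_level i * \<bar>(K *v x) $ i\<bar>)
    - (\<Sum>i\<in>UNIV. Hp$i$i * (sat_level i)\<^sup>2) \<le> 2 * V x"
proof -
  have "(\<Sum>i\<in>UNIV. Hp$i$i * sat_level i * \<bar>(K *v x) $ i\<bar>) - (\<Sum>i\<in>UNIV. Hp$i$i * (sat_level i)\<^sup>2)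
      \<le> (\<Sum>i\<in>UNIV. Hp$i$i * (((K *v x) $ i)\<^sup>2 - (dz ub lb (K *v x) $ i)\<^sup>2))"
    unfolding sum_subtractf[symmetric] by (intro sum_mono dz_term_ge)
  then show ?thesis
    using twice_V_eq[of x] dz_Hn_nonneg[of "K *v x"] by linarith
qed

lemma V_radially_unbounded: "filterlim V at_top at_infinity"
proof -
  define l where "l x = (\<Sum>i\<in>UNIV. Hp$i$i * sat_level i * \<bar>(K *v x) $ i\<bar>)" for x
  have l_term_pos: "0 < Hp$i$i * sat_level i" for i
    using Hp_diag_pos ub_pos lb_pos by simp
  have "\<exists>m>0. \<forall>x. 1 \<le> norm x \<longrightarrow> m * norm x \<le> Pn_form x + l x"
  proof (rule linear_growth_of_homogeneous)
    show "continuous_on UNIV Pn_form" "continuous_on UNIV l"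
      unfolding l_def by (intro continuous_intros)+
    show "Pn_form (c *\<^sub>R x) = c\<^sup>2 * Pn_form x" for c x
      by (simp add: matrix_vector_mult_scaleR power2_eq_square)
    show "l (c *\<^sub>R x) = c * l x" if "0 \<le> c" for c x
      using that by (simp add: l_def matrix_vector_mult_scaleR abs_mult sum_distrib_left mult_ac)
    show "0 \<le> Pn_form x" for x
      by (rule Pn_form_nonneg)
    show "0 < Pn_form x + l x" if "x \<noteq> 0" for x
      using Pn_form_pos_or_K_nonzero[OF that]
    proof
      assume "0 < Pn_form x"
      then show ?thesis
        using l_term_pos unfolding l_def by (simp add: add_pos_nonneg sum_nonneg less_imp_le)
    next
      assume "K *v x \<noteq> 0"
      then obtain i where "(K *v x) $ i \<noteq> 0"
        by (auto simp: vec_eq_iff)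
      then have "0 < l x"
        unfolding l_def using l_term_pos
        by (intro sum_pos2[of _ i] mult_pos_pos[OF l_term_pos]
            mult_nonneg_nonneg[OF less_imp_le[OF l_term_pos]]) auto
      then show ?thesis
        using Pn_form_nonneg[of x] by linarith
    qed
  qed
  then obtain m where "0 < m"
    and m: "\<And>x. 1 \<le> norm x \<Longrightarrow> m * norm x \<le> Pn_form x + l x"
    by blast
  show ?thesis
  proof (rule filterlim_at_infinity_of_linear_lower_bound)
    show "0 < m / 2"
      using \<open>0 < m\<close> by simp
    show "m / 2 * norm x - (\<Sum>i\<in>UNIV. Hp$i$i * (sat_level i)\<^sup>2) / 2 \<le> V x" if "1 \<le> norm x" for x
      using m[OF that] twice_V_ge[of x] unfolding l_def by linarith
  qed
qed

end

theorem lemma3: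
  fixes ub lb :: "real^'m" and K :: "real^'n^'m" and P0 :: "real^'n^'n"
    and H Hp Hn :: "real^'m^'m"
  assumes "\<forall>i. ub$i > 0" and "\<forall>i. lb$i > 0"
    and "sym_mat P0"
    and "diag_mat H"
    and "pos_def (P0 + transpose K ** H ** K)"
    and "H = Hp - Hn"
    and "diag_mat Hp" and "pos_def Hp"
    and "diag_mat Hn" and "psd Hn"
    and "psd (P0 - transpose K ** Hn ** K)"
  shows "(\<exists>T0 :: real^'m^'m. diag_mat T0 \<and> pos_def T0
            \<and> pos_def (blk11 (Qmat P0 K H))
            \<and> psd (Qmat P0 K H - Sigma0 K T0))
       \<and> (Vfun ub lb P0 K H 0 = 0 \<and> (\<forall>x. x \<noteq> 0 \<longrightarrow> Vfun ub lb P0 K H x > 0))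
       \<and> filterlim (Vfun ub lb P0 K H) at_top at_infinity"
proof -
  interpret saturated_lyapunov ub lb K P0 Hp Hn
    using assms by unfold_locales simp_all
  let ?T0 = "(1/2::real) *\<^sub>R Hp"
  have "diag_mat ?T0" "pos_def ?T0"
    using assms(7,8) by (simp_all add: diag_mat_scaleR pos_def_scaleR)
  moreover have "pos_def (blk11 (Qmat P0 K H))"
    using assms(5) unfolding Qmat_def scaleR_blk blk11_blk by (simp add: pos_def_scaleR)
  moreover have "psd (Qmat P0 K H - Sigma0 K ?T0)"
    unfolding assms(6) using pos_def_imp_psd[OF pos_def_Hp] psd_Hn psd_Pn
    by (rule psd_Qmat_minus_Sigma0)
  moreover have "V 0 = 0"
    using ub_pos lb_pos by (intro Vfun_zero less_imp_le)
  ultimately show ?thesis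
    using V_pos V_radially_unbounded unfolding assms(6) by blast
qed

end
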